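(* Let $(Q,* )$ and $(Q',\cdot)$ be automorphic loops and let $f:(Q,* )\to(Q',\cdot)$ be a half-isomorphism. If $(Q',\cdot)$ satisfies condition (C) (for all $a,b\in Q'$: $a\cdot(a\cdot b)=(b\cdot a)\cdot a$ if and only if $a\cdot b=b\cdot a$), then $(Q,* )$ also satisfies condition (C): for all $x,y\in Q$, $x*(x*y)=(y*x)*x$ if and only if $x*y=y*x$.
   Context: A loop is a set with a binary operation in which all equations $ax=b$, $ya=b$ are uniquely solvable and which has a two-sided identity. For $a\in L$, $R_a:x\mapsto xa$, $L_a:x\mapsto ax$; the inner mapping group is the stabilizer of the identity in the group generated by all $R_a,L_a$. A loop is automorphic if every inner mapping is an automorphism. A half-isomorphism between loops $(L,* )$, $(L',\cdot)$ is a bijection $f$ with $f(x*y)\in\{f(x)\cdot f(y),f(y)\cdot f(x)\}$ for all $x,y\in L$. *)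

theory Defs
  imports Main
begin

text \<open>A loop is modelled on a whole type: the binary operation m is total on the type.
  Every loop is a nonempty set, so this is no loss of generality.\<close>

definition loop :: "('a \<Rightarrow> 'a \<Rightarrow> 'a) \<Rightarrow> bool" where
  "loop m \<longleftrightarrow> (\<forall>a b. \<exists>!x. m a x = b) \<and> (\<forall>a b. \<exists>!y. m y a = b)
     \<and> (\<exists>e. \<forall>x. m e x = x \<and> m x e = x)"

definition loop_unit :: "('a \<Rightarrow> 'a \<Rightarrow> 'a) \<Rightarrow> 'a" where
  "loop_unit m = (THE e. \<forall>x. m e x = x \<and> m x e = x)"

definition rmul :: "('a \<Rightarrow> 'a \<Rightarrow> 'a) \<Rightarrow> 'a \<Rightarrow> 'a \<Rightarrow> 'a" where
  "rmul m a = (\<lambda>x. m x a)"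

definition lmul :: "('a \<Rightarrow> 'a \<Rightarrow> 'a) \<Rightarrow> 'a \<Rightarrow> 'a \<Rightarrow> 'a" where
  "lmul m a = (\<lambda>x. m a x)"

inductive_set mlt :: "('a \<Rightarrow> 'a \<Rightarrow> 'a) \<Rightarrow> ('a \<Rightarrow> 'a) set" for m where
  mlt_id: "id \<in> mlt m"
| mlt_R: "f \<in> mlt m \<Longrightarrow> rmul m a \<circ> f \<in> mlt m"
| mlt_L: "f \<in> mlt m \<Longrightarrow> lmul m a \<circ> f \<in> mlt m"
| mlt_Rinv: "f \<in> mlt m \<Longrightarrow> inv (rmul m a) \<circ> f \<in> mlt m"
| mlt_Linv: "f \<in> mlt m \<Longrightarrow> inv (lmul m a) \<circ> f \<in> mlt m"

definition inn :: "('a \<Rightarrow> 'a \<Rightarrow> 'a) \<Rightarrow> ('a \<Rightarrow> 'a) set" where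
  "inn m = {\<phi> \<in> mlt m. \<phi> (loop_unit m) = loop_unit m}"

definition automorphic_loop :: "('a \<Rightarrow> 'a \<Rightarrow> 'a) \<Rightarrow> bool" where
  "automorphic_loop m \<longleftrightarrow> loop m \<and>
     (\<forall>\<phi> \<in> inn m. \<forall>x y. \<phi> (m x y) = m (\<phi> x) (\<phi> y))"

definition half_iso :: "('a \<Rightarrow> 'a \<Rightarrow> 'a) \<Rightarrow> ('b \<Rightarrow> 'b \<Rightarrow> 'b) \<Rightarrow> ('a \<Rightarrow> 'b) \<Rightarrow> bool" where
  "half_iso m m' f \<longleftrightarrow> bij f \<and>
     (\<forall>x y. f (m x y) = m' (f x) (f y) \<or> f (m x y) = m' (f y) (f x))"

definition condC :: "('a \<Rightarrow> 'a \<Rightarrow> 'a) \<Rightarrow> bool" where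
  "condC m \<longleftrightarrow> (\<forall>a b. m a (m a b) = m (m b a) a \<longleftrightarrow> m a b = m b a)"

end

theory Submission
  imports Defs
begin

text \<open>Write \<open>T\<^sub>x = L\<^sub>x\<^sup>-\<^sup>1 R\<^sub>x\<close>, so that \<open>x T\<^sub>x(w) = w x\<close>. In an automorphic loop \<open>T\<^sub>x\<close> is an
  automorphism, hence \<open>x p = u x\<close> and \<open>x q = v x\<close> give \<open>x (p q) = (u v) x\<close>. With \<open>z = T\<^sub>x(y)\<close>
  this turns \<open>x (x y) = (y x) x\<close> into the pair of equations \<open>x z = y x\<close>, \<open>z x = x y\<close>.
  If \<open>x y \<noteq> y x\<close>, the half-isomorphism maps both products \<open>{x y, y x}\<close> onto both orders of
  \<open>f x, f y\<close>, and likewise for \<open>z\<close>, so that \<open>{a b, b a} = {a c, c a}\<close> in \<open>Q'\<close> with \<open>a = f x\<close>,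
  \<open>b = f y\<close>, \<open>c = f z\<close>. Apart from cancellation, the only way this can happen is
  \<open>a c = b a\<close>, \<open>c a = a b\<close>; then \<open>a (a b) = (a c) a = (b a) a\<close>, and condition (C) in \<open>Q'\<close> forces
  \<open>a b = b a\<close>, hence \<open>b = c\<close>. So \<open>z = y\<close>, i.e. \<open>x y = y x\<close>, a contradiction.
  The converse implication of (C) holds in every automorphic loop.\<close>

lemma loop_unit:
  assumes "loop m"
  shows "m (loop_unit m) x = x" and "m x (loop_unit m) = x"
proof -
  obtain e where e: "\<forall>x. m e x = x \<and> m x e = x"
    using assms unfolding loop_def by blast
  have "loop_unit m = e"
    unfolding loop_unit_def by (rule the_equality) (use e in metis)+
  then show "m (loop_unit m) x = x" and "m x (loop_unit m) = x"
    using e by simp_all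
qed

lemma loop_left_cancel: "loop m \<Longrightarrow> m a u = m a v \<longleftrightarrow> u = v"
  unfolding loop_def by metis

lemma loop_right_cancel: "loop m \<Longrightarrow> m u a = m v a \<longleftrightarrow> u = v"
  unfolding loop_def by metis

lemma loop_bij_lmul: "loop m \<Longrightarrow> bij (lmul m a)"
  unfolding loop_def bij_def inj_def surj_def lmul_def by metis

definition middle_inner :: "('a \<Rightarrow> 'a \<Rightarrow> 'a) \<Rightarrow> 'a \<Rightarrow> 'a \<Rightarrow> 'a" where
  "middle_inner m x = inv (lmul m x) \<circ> rmul m x"

lemma mult_middle_inner:
  assumes "loop m"
  shows "m x (middle_inner m x w) = m w x"
proof -
  have "lmul m x (inv (lmul m x) (m w x)) = m w x"
    using bij_is_surj[OF loop_bij_lmul[OF assms]] by (rule surj_f_inv_f)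
  then show ?thesis
    by (simp add: middle_inner_def lmul_def rmul_def)
qed

lemma middle_inner_eq_iff:
  assumes "loop m"
  shows "middle_inner m x w = p \<longleftrightarrow> m x p = m w x"
  using loop_left_cancel[OF assms] mult_middle_inner[OF assms] by metis

lemma middle_inner_in_inn:
  assumes "loop m"
  shows "middle_inner m x \<in> inn m"
proof -
  have "inv (lmul m x) \<circ> (rmul m x \<circ> id) \<in> mlt m"
    by (intro mlt_Linv mlt_R mlt_id)
  moreover have "middle_inner m x (loop_unit m) = loop_unit m"
    using middle_inner_eq_iff[OF assms] loop_unit[OF assms] by metis
  ultimately show ?thesis
    unfolding inn_def middle_inner_def by simp
qed

lemma automorphic_loop_middle_inner_mult:
  assumes "automorphic_loop m"
  shows "middle_inner m x (m u v) = m (middle_inner m x u) (middle_inner m x v)"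
proof -
  have "loop m" and hom: "\<forall>\<phi> \<in> inn m. \<forall>x y. \<phi> (m x y) = m (\<phi> x) (\<phi> y)"
    using assms unfolding automorphic_loop_def by simp_all
  then show ?thesis
    using bspec[OF hom middle_inner_in_inn] by simp
qed

lemma automorphic_loop_twisted_mult:
  assumes "automorphic_loop m" and "m x p = m u x" and "m x q = m v x"
  shows "m x (m p q) = m (m u v) x"
proof -
  have L: "loop m"
    using assms(1) unfolding automorphic_loop_def by simp
  have "middle_inner m x u = p" and "middle_inner m x v = q"
    using assms(2,3) middle_inner_eq_iff[OF L] by simp_all
  then have "middle_inner m x (m u v) = m p q"
    using automorphic_loop_middle_inner_mult[OF assms(1)] by simp
  then show ?thesis
    using middle_inner_eq_iff[OF L] by simp
qed

lemma automorphic_loop_commute_imp_condC_identity: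
  assumes "automorphic_loop m" and "m x y = m y x"
  shows "m x (m x y) = m (m y x) x"
  using automorphic_loop_twisted_mult[OF assms(1), of x x x y y] assms(2) by simp

lemma automorphic_condC_product_pair_cancel:
  assumes A: "automorphic_loop m" and C: "condC m"
    and pairs: "{m a b, m b a} = {m a c, m c a}"
  shows "b = c"
proof -
  have L: "loop m"
    using A unfolding automorphic_loop_def by simp
  consider "m a b = m a c" | "m b a = m c a" | "m a c = m b a" "m c a = m a b"
    using pairs by (auto simp: doubleton_eq_iff)
  then show ?thesis
  proof cases
    case 3
    have "m a (m a b) = m (m a c) a"
      using automorphic_loop_twisted_mult[OF A, of a a a b c] 3 by simp
    then have "m a b = m b a"
      using C 3 unfolding condC_def by simp
    then show ?thesis
      using 3 loop_right_cancel[OF L] by metis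
  qed (use loop_left_cancel[OF L] loop_right_cancel[OF L] in simp_all)
qed

lemma half_iso_product_pair:
  assumes "half_iso m m' f" and "m x y \<noteq> m y x"
  shows "{f (m x y), f (m y x)} = {m' (f x) (f y), m' (f y) (f x)}"
proof -
  have "f (m x y) \<noteq> f (m y x)"
    using assms unfolding half_iso_def bij_def inj_def by blast
  moreover have "f (m x y) \<in> {m' (f x) (f y), m' (f y) (f x)}"
    and "f (m y x) \<in> {m' (f x) (f y), m' (f y) (f x)}"
    using assms(1) unfolding half_iso_def by auto
  ultimately show ?thesis
    by auto
qed

theorem proposition4p3:
  fixes m :: "'a \<Rightarrow> 'a \<Rightarrow> 'a" and m' :: "'b \<Rightarrow> 'b \<Rightarrow> 'b" and f :: "'a \<Rightarrow> 'b"
  assumes "automorphic_loop m" and "automorphic_loop m'"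
    and "half_iso m m' f"
    and "condC m'"
  shows "condC m"
  unfolding condC_def
proof (intro allI iffI)
  have L: "loop m"
    using assms(1) unfolding automorphic_loop_def by simp
  fix x y
  assume identity: "m x (m x y) = m (m y x) x"
  define z where "z = middle_inner m x y"
  have xz: "m x z = m y x"
    unfolding z_def using mult_middle_inner[OF L] .
  have "m x (m z x) = m x (m x y)"
    using automorphic_loop_twisted_mult[OF assms(1) xz, of x x] identity by simp
  then have zx: "m z x = m x y"
    using loop_left_cancel[OF L] by simp
  show "m x y = m y x"
  proof (rule ccontr)
    assume noncomm: "m x y \<noteq> m y x"
    then have "{m' (f x) (f y), m' (f y) (f x)} = {m' (f x) (f z), m' (f z) (f x)}"
      using half_iso_product_pair[OF assms(3), of x y] half_iso_product_pair[OF assms(3), of x z]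
      by (simp add: xz zx insert_commute)
    then have "f y = f z"
      using automorphic_condC_product_pair_cancel[OF assms(2,4)] by blast
    then have "y = z"
      using assms(3) unfolding half_iso_def bij_def inj_def by blast
    then show False
      using noncomm xz by simp
  qed
qed (rule automorphic_loop_commute_imp_condC_identity[OF assms(1)])

end
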